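(* Fix $a>0$, $b>0$, $c>0$, $\theta>0$ such that $\zeta:=\frac{b^2-a(c-\theta)}{a^2}<0$, and let $\kappa=b/a$, $s=\sqrt{-\zeta}$, $z=\frac{c-\theta}{b}$, $p=\frac{b^2}{a(c-\theta)}$. If $a\le\frac{2b^2}{c-\theta}$, the distribution assigning probability $\tfrac12$ to each of $\kappa-s$ and $\kappa+s$ is a distribution on $[0,\infty)$; if $a\ge\frac{2b^2}{c-\theta}$, then $p\in(0,1)$ and the distribution assigning probability $1-p$ to $0$ and probability $p$ to $z$ is a distribution on $[0,\infty)$. In each case the distribution has mean $\kappa$ and variance $-\zeta$, and the profile in which both players use it is a mixed Nash equilibrium of the unrestricted contest (efforts $x,y\ge0$, payoffs $P(x,y)-\theta x$ and $1-P(x,y)-\theta y$ with $P(x,y)=\tfrac12+(x-y)(c-b(x+y)+axy)$, no truncation). At $a=\frac{2b^2}{c-\theta}$ the two distributions coincide. *)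

theory Defs
  imports "HOL-Probability.Probability"
begin

definition contestP :: "real \<Rightarrow> real \<Rightarrow> real \<Rightarrow> real \<Rightarrow> real \<Rightarrow> real" where
  "contestP a b c x y = 1/2 + (x - y) * (c - b * (x + y) + a * x * y)"

definition payoff1 :: "real \<Rightarrow> real \<Rightarrow> real \<Rightarrow> real \<Rightarrow> real \<times> real \<Rightarrow> real" where
  "payoff1 a b c \<theta> xy = contestP a b c (fst xy) (snd xy) - \<theta> * fst xy"

definition payoff2 :: "real \<Rightarrow> real \<Rightarrow> real \<Rightarrow> real \<Rightarrow> real \<times> real \<Rightarrow> real" where
  "payoff2 a b c \<theta> xy = 1 - contestP a b c (fst xy) (snd xy) - \<theta> * snd xy"

definition mixed_strategy :: "real measure \<Rightarrow> bool" where
  "mixed_strategy M \<longleftrightarrow> prob_space M \<and> sets M = sets borel \<and> (AE x in M. 0 \<le> x)"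

definition mixed_NE :: "real \<Rightarrow> real \<Rightarrow> real \<Rightarrow> real \<Rightarrow> real measure \<Rightarrow> real measure \<Rightarrow> bool" where
  "mixed_NE a b c \<theta> M N \<longleftrightarrow>
     mixed_strategy M \<and> mixed_strategy N \<and>
     integrable (M \<Otimes>\<^sub>M N) (payoff1 a b c \<theta>) \<and>
     integrable (M \<Otimes>\<^sub>M N) (payoff2 a b c \<theta>) \<and>
     (\<forall>M'. mixed_strategy M' \<and> integrable (M' \<Otimes>\<^sub>M N) (payoff1 a b c \<theta>) \<longrightarrow>
        integral\<^sup>L (M' \<Otimes>\<^sub>M N) (payoff1 a b c \<theta>) \<le> integral\<^sup>L (M \<Otimes>\<^sub>M N) (payoff1 a b c \<theta>)) \<and>
     (\<forall>N'. mixed_strategy N' \<and> integrable (M \<Otimes>\<^sub>M N') (payoff2 a b c \<theta>) \<longrightarrow>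
        integral\<^sup>L (M \<Otimes>\<^sub>M N') (payoff2 a b c \<theta>) \<le> integral\<^sup>L (M \<Otimes>\<^sub>M N) (payoff2 a b c \<theta>))"

definition pmf_borel :: "real pmf \<Rightarrow> real measure" where
  "pmf_borel D = distr (measure_pmf D) borel (\<lambda>x. x)"

definition two_point_half :: "real \<Rightarrow> real \<Rightarrow> real pmf" where
  "two_point_half u v = map_pmf (\<lambda>t. if t then v else u) (bernoulli_pmf (1/2))"

definition zero_or :: "real \<Rightarrow> real \<Rightarrow> real pmf" where
  "zero_or p z = map_pmf (\<lambda>t. if t then z else 0) (bernoulli_pmf p)"

end

theory Submission imports Defs begin

text \<open>Against an opponent whose effort distribution has mean \<open>b/a\<close> and second moment
  \<open>(c - \<theta>)/a\<close>, the expected payoff of a pure effort \<open>x\<close> is a polynomial in \<open>x\<close> whose linear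
  and quadratic coefficients vanish. Every strategy is then a best reply, so a symmetric profile
  of such a distribution is an equilibrium; since the game is symmetric it suffices to check this
  for player 1. The two distributions of the theorem are the two-point distributions with these
  moments: the symmetric one \<open>\<kappa> \<plusminus> s\<close>, which stays nonnegative as long as \<open>s \<le> \<kappa>\<close>, and the one
  with an atom at \<open>0\<close>.\<close>

lemma payoff2_swap: "payoff2 a b c \<theta> (y, x) = payoff1 a b c \<theta> (x, y)"
  by (simp add: payoff1_def payoff2_def contestP_def algebra_simps)

lemma payoff1_eq_poly:
  "payoff1 a b c \<theta> (x, y) =
     1/2 + (c - \<theta>) * x - b * x^2 - (c - a * x^2) * y + (b - a * x) * y^2"
  by (simp add: payoff1_def contestP_def power2_eq_square algebra_simps)

lemma borel_measurable_payoff: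
  "payoff1 a b c \<theta> \<in> borel_measurable (borel \<Otimes>\<^sub>M borel)"
  "payoff2 a b c \<theta> \<in> borel_measurable (borel \<Otimes>\<^sub>M borel)"
  unfolding payoff1_def payoff2_def contestP_def by measurable

lemma sets_pmf_borel [simp]: "sets (pmf_borel D) = sets borel"
  by (simp add: pmf_borel_def)

lemma prob_space_pmf_borel: "prob_space (pmf_borel D)"
  unfolding pmf_borel_def
  by (rule prob_space.prob_space_distr) (auto simp: measure_pmf.prob_space_axioms)

lemma mixed_strategy_pmf_borel:
  assumes "set_pmf D \<subseteq> {0..}"
  shows "mixed_strategy (pmf_borel D)"
  unfolding mixed_strategy_def
proof (intro conjI prob_space_pmf_borel)
  show "AE x in pmf_borel D. 0 \<le> x"
    unfolding pmf_borel_def using assms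
    by (subst AE_distr_iff) (auto intro!: AE_pmfI)
qed simp

lemma integral_pmf_borel:
  fixes f :: "real \<Rightarrow> real"
  assumes "f \<in> borel_measurable borel"
  shows "integral\<^sup>L (pmf_borel D) f = measure_pmf.expectation D f"
  unfolding pmf_borel_def using assms by (subst integral_distr) auto

lemma integrable_pmf_borel_finite:
  fixes f :: "real \<Rightarrow> real"
  assumes "finite (set_pmf D)" "f \<in> borel_measurable borel"
  shows "integrable (pmf_borel D) f"
  unfolding pmf_borel_def using assms
  by (subst integrable_distr_eq[where N = borel]) (auto intro!: integrable_measure_pmf_finite)

lemma integrable_pair_pmf_borel_finite:
  fixes f :: "real \<times> real \<Rightarrow> real"
  assumes fin: "finite (set_pmf D)" "finite (set_pmf E)"
    and f: "f \<in> borel_measurable (borel \<Otimes>\<^sub>M borel)"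
  shows "integrable (pmf_borel D \<Otimes>\<^sub>M pmf_borel E) f"
proof -
  interpret D: prob_space "pmf_borel D" by (rule prob_space_pmf_borel)
  interpret E: prob_space "pmf_borel E" by (rule prob_space_pmf_borel)
  interpret DE: pair_prob_space "pmf_borel D" "pmf_borel E" ..
  have sets_eq: "sets (pmf_borel D \<Otimes>\<^sub>M pmf_borel E) = sets (borel \<Otimes>\<^sub>M borel)"
    by (rule sets_pair_measure_cong) simp_all
  have f_meas: "f \<in> borel_measurable (pmf_borel D \<Otimes>\<^sub>M pmf_borel E)"
    using f measurable_cong_sets[OF sets_eq refl] by auto
  show ?thesis
  proof (rule DE.Fubini_integrable[OF f_meas])
    have "(\<lambda>x. \<integral>y. norm (f (x, y)) \<partial>pmf_borel E) \<in> borel_measurable (pmf_borel D)"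
      using f_meas by (intro E.borel_measurable_lebesgue_integral) simp
    then show "integrable (pmf_borel D) (\<lambda>x. \<integral>y. norm (f (x, y)) \<partial>pmf_borel E)"
      using measurable_cong_sets[of "pmf_borel D" borel] by (intro integrable_pmf_borel_finite fin) auto
    show "AE x in pmf_borel D. integrable (pmf_borel E) (\<lambda>y. f (x, y))"
      using f by (intro AE_I2 integrable_pmf_borel_finite fin) (auto intro: measurable_Pair2)
  qed
qed

lemma integral_pair_measure_const_fst:
  fixes f :: "'a \<times> 'b \<Rightarrow> real"
  assumes "prob_space M" "prob_space N" "integrable (M \<Otimes>\<^sub>M N) f"
    and "\<And>x. (\<integral>y. f (x, y) \<partial>N) = K"
  shows "integral\<^sup>L (M \<Otimes>\<^sub>M N) f = K"
proof -
  interpret M: prob_space M by fact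
  interpret N: prob_space N by fact
  interpret MN: pair_prob_space M N ..
  have "integral\<^sup>L (M \<Otimes>\<^sub>M N) f = (\<integral>x. (\<integral>y. f (x, y) \<partial>N) \<partial>M)"
    using MN.integral_fst'[OF assms(3)] by simp
  then show ?thesis by (simp add: assms(4) M.prob_space)
qed

lemma integral_pair_measure_const_snd:
  fixes f :: "'a \<times> 'b \<Rightarrow> real"
  assumes "prob_space M" "prob_space N" "integrable (M \<Otimes>\<^sub>M N) f"
    and "\<And>y. (\<integral>x. f (x, y) \<partial>M) = K"
  shows "integral\<^sup>L (M \<Otimes>\<^sub>M N) f = K"
proof -
  interpret M: prob_space M by fact
  interpret N: prob_space N by fact
  interpret MN: pair_prob_space M N ..
  have "integral\<^sup>L (M \<Otimes>\<^sub>M N) f = (\<integral>y. (\<integral>x. f (x, y) \<partial>M) \<partial>N)"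
    using MN.integral_snd[of "\<lambda>x y. f (x, y)"] assms(3) by simp
  then show ?thesis by (simp add: assms(4) N.prob_space)
qed

lemma expected_payoff1_pmf_borel:
  assumes "finite (set_pmf D)"
  shows "(\<integral>y. payoff1 a b c \<theta> (x, y) \<partial>pmf_borel D) =
     1/2 - c * measure_pmf.expectation D (\<lambda>y. y) + b * measure_pmf.expectation D (\<lambda>y. y^2)
     + (c - \<theta> - a * measure_pmf.expectation D (\<lambda>y. y^2)) * x
     + (a * measure_pmf.expectation D (\<lambda>y. y) - b) * x^2"
proof -
  have int: "integrable (measure_pmf D) f" for f :: "real \<Rightarrow> real"
    using assms by (rule integrable_measure_pmf_finite)
  have "(\<integral>y. payoff1 a b c \<theta> (x, y) \<partial>pmf_borel D) =
      measure_pmf.expectation D (\<lambda>y. payoff1 a b c \<theta> (x, y))"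
    by (rule integral_pmf_borel) (simp add: payoff1_def contestP_def)
  also have "\<dots> = 1/2 + (c - \<theta>) * x - b * x^2
      - (c - a * x^2) * measure_pmf.expectation D (\<lambda>y. y)
      + (b - a * x) * measure_pmf.expectation D (\<lambda>y. y^2)"
    unfolding payoff1_eq_poly by (simp add: int)
  finally show ?thesis
    by (simp add: algebra_simps)
qed

lemma mixed_NE_of_moments:
  assumes fin: "finite (set_pmf D)" and nonneg: "set_pmf D \<subseteq> {0..}"
    and mean: "a * measure_pmf.expectation D (\<lambda>y. y) = b"
    and second_moment: "a * measure_pmf.expectation D (\<lambda>y. y^2) = c - \<theta>"
  shows "mixed_NE a b c \<theta> (pmf_borel D) (pmf_borel D)"
proof -
  define N where "N = pmf_borel D"
  define K where "K = 1/2 - c * measure_pmf.expectation D (\<lambda>y. y)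
    + b * measure_pmf.expectation D (\<lambda>y. y^2)"
  have N_strategy: "mixed_strategy N"
    unfolding N_def using nonneg by (rule mixed_strategy_pmf_borel)
  have N_prob: "prob_space N"
    unfolding N_def by (rule prob_space_pmf_borel)
  have indifferent1: "(\<integral>y. payoff1 a b c \<theta> (x, y) \<partial>N) = K" for x
    unfolding N_def K_def expected_payoff1_pmf_borel[OF fin]
    using mean second_moment by simp
  have indifferent2: "(\<integral>x. payoff2 a b c \<theta> (x, y) \<partial>N) = K" for y
    using indifferent1 by (simp add: payoff2_swap)
  have value1: "integral\<^sup>L (M' \<Otimes>\<^sub>M N) (payoff1 a b c \<theta>) = K"
    if "mixed_strategy M'" "integrable (M' \<Otimes>\<^sub>M N) (payoff1 a b c \<theta>)" for M'
    using that N_prob indifferent1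
    by (intro integral_pair_measure_const_fst) (auto simp: mixed_strategy_def)
  have value2: "integral\<^sup>L (N \<Otimes>\<^sub>M M') (payoff2 a b c \<theta>) = K"
    if "mixed_strategy M'" "integrable (N \<Otimes>\<^sub>M M') (payoff2 a b c \<theta>)" for M'
    using that N_prob indifferent2
    by (intro integral_pair_measure_const_snd) (auto simp: mixed_strategy_def)
  have integrable: "integrable (N \<Otimes>\<^sub>M N) (payoff1 a b c \<theta>)"
    "integrable (N \<Otimes>\<^sub>M N) (payoff2 a b c \<theta>)"
    unfolding N_def using fin
    by (auto intro: integrable_pair_pmf_borel_finite borel_measurable_payoff)
  show ?thesis
    unfolding mixed_NE_def N_def[symmetric]
    using N_strategy integrable value1 value2 by auto
qed

lemma variance_pmf_finite:
  fixes D :: "real pmf"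
  assumes "finite (set_pmf D)"
  shows "measure_pmf.variance D (\<lambda>y. y) =
    measure_pmf.expectation D (\<lambda>y. y^2) - (measure_pmf.expectation D (\<lambda>y. y))^2"
  by (rule measure_pmf.variance_eq) (simp_all add: integrable_measure_pmf_finite[OF assms])

lemma moments_symmetric_mixed_NE:
  fixes D :: "real pmf"
  assumes "a > 0" "finite (set_pmf D)" "set_pmf D \<subseteq> {0..}"
    and mean: "a * measure_pmf.expectation D (\<lambda>y. y) = b"
    and second_moment: "a * measure_pmf.expectation D (\<lambda>y. y^2) = c - \<theta>"
  shows "measure_pmf.expectation D (\<lambda>x. x) = b / a"
    and "measure_pmf.variance D (\<lambda>x. x) = - ((b^2 - a * (c - \<theta>)) / a^2)"
    and "mixed_NE a b c \<theta> (pmf_borel D) (pmf_borel D)"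
proof -
  show mean': "measure_pmf.expectation D (\<lambda>x. x) = b / a"
    using mean assms(1) by (simp add: field_simps)
  have second_moment': "measure_pmf.expectation D (\<lambda>y. y^2) = (c - \<theta>) / a"
    using second_moment assms(1) by (simp add: field_simps)
  have "measure_pmf.variance D (\<lambda>x. x) =
      measure_pmf.expectation D (\<lambda>y. y^2) - (measure_pmf.expectation D (\<lambda>y. y))^2"
    by (rule variance_pmf_finite) fact
  also have "\<dots> = (c - \<theta>) / a - (b / a)^2"
    unfolding mean' second_moment' ..
  also have "\<dots> = - ((b^2 - a * (c - \<theta>)) / a^2)"
    using assms(1) by (simp add: power2_eq_square field_simps)
  finally show "measure_pmf.variance D (\<lambda>x. x) = - ((b^2 - a * (c - \<theta>)) / a^2)" .
  show "mixed_NE a b c \<theta> (pmf_borel D) (pmf_borel D)"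
    by (rule mixed_NE_of_moments) fact+
qed

lemma expectation_two_point_half:
  fixes f :: "real \<Rightarrow> real"
  shows "measure_pmf.expectation (two_point_half u v) f = (f u + f v) / 2"
  by (simp add: two_point_half_def)

lemma expectation_zero_or:
  fixes f :: "real \<Rightarrow> real"
  assumes "0 \<le> p" "p \<le> 1"
  shows "measure_pmf.expectation (zero_or p z) f = (1 - p) * f 0 + p * f z"
  using assms by (simp add: zero_or_def algebra_simps)

lemma finite_set_two_point_half: "finite (set_pmf (two_point_half u v))"
  by (simp add: two_point_half_def)

lemma finite_set_zero_or: "finite (set_pmf (zero_or p z))"
  by (simp add: zero_or_def)

lemma two_point_half_moments:
  fixes a b C :: real
  assumes "a > 0" "b > 0" "b^2 < a * C" "a * C \<le> 2 * b^2"
  defines "s \<equiv> sqrt ((a * C - b^2) / a^2)"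
  shows "set_pmf (two_point_half (b/a - s) (b/a + s)) \<subseteq> {0..}"
    and "a * measure_pmf.expectation (two_point_half (b/a - s) (b/a + s)) (\<lambda>y. y) = b"
    and "a * measure_pmf.expectation (two_point_half (b/a - s) (b/a + s)) (\<lambda>y. y^2) = C"
proof -
  have s_sq: "s^2 = (a * C - b^2) / a^2"
    unfolding s_def using assms(3) by simp
  have "(a * C - b^2) / a^2 \<le> b^2 / a^2"
    using assms(4) by (intro divide_right_mono) auto
  then have "s^2 \<le> (b/a)^2"
    unfolding s_sq power_divide .
  then have "s \<le> b/a"
    by (rule power2_le_imp_le) (use assms(1,2) in simp)
  moreover have "s \<ge> 0"
    unfolding s_def by (rule real_sqrt_ge_zero) (use assms(3) in simp)
  ultimately show "set_pmf (two_point_half (b/a - s) (b/a + s)) \<subseteq> {0..}"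
    by (auto simp: two_point_half_def)
  show "a * measure_pmf.expectation (two_point_half (b/a - s) (b/a + s)) (\<lambda>y. y) = b"
    using assms(1) by (simp add: expectation_two_point_half)
  have "((b/a - s)^2 + (b/a + s)^2) / 2 = (b/a)^2 + s^2"
    by (simp add: power2_eq_square algebra_simps)
  also have "\<dots> = (a * C) / a^2"
    unfolding s_sq power_divide by (simp add: add_divide_distrib[symmetric])
  also have "\<dots> = C / a"
    using assms(1) by (simp add: power2_eq_square)
  finally show "a * measure_pmf.expectation (two_point_half (b/a - s) (b/a + s)) (\<lambda>y. y^2) = C"
    using assms(1) by (simp add: expectation_two_point_half field_simps)
qed

lemma zero_or_moments:
  fixes a b C :: real
  assumes "a > 0" "b > 0" "b^2 < a * C"
  shows "0 < b^2 / (a * C)" "b^2 / (a * C) < 1"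
    and "set_pmf (zero_or (b^2 / (a * C)) (C / b)) \<subseteq> {0..}"
    and "a * measure_pmf.expectation (zero_or (b^2 / (a * C)) (C / b)) (\<lambda>y. y) = b"
    and "a * measure_pmf.expectation (zero_or (b^2 / (a * C)) (C / b)) (\<lambda>y. y^2) = C"
proof -
  have "a * C > 0" using assms(3) zero_le_power2[of b] by linarith
  then have C: "C > 0" using assms(1) by (simp add: zero_less_mult_iff)
  show p0: "0 < b^2 / (a * C)" and p1: "b^2 / (a * C) < 1"
    using assms \<open>a * C > 0\<close> by auto
  show "set_pmf (zero_or (b^2 / (a * C)) (C / b)) \<subseteq> {0..}"
    using C assms(2) by (auto simp: zero_or_def)
  show "a * measure_pmf.expectation (zero_or (b^2 / (a * C)) (C / b)) (\<lambda>y. y) = b"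
    "a * measure_pmf.expectation (zero_or (b^2 / (a * C)) (C / b)) (\<lambda>y. y^2) = C"
    using p0 p1 assms(1,2) C
    by (simp_all add: expectation_zero_or power2_eq_square field_simps)
qed

lemma two_point_half_eq_zero_or:
  fixes a b C :: real
  assumes "a > 0" "b > 0" "a * C = 2 * b^2"
  shows "two_point_half (b/a - sqrt ((a * C - b^2) / a^2)) (b/a + sqrt ((a * C - b^2) / a^2))
       = zero_or (b^2 / (a * C)) (C / b)"
proof -
  have s: "sqrt ((a * C - b^2) / a^2) = b/a"
    unfolding assms(3) using assms(1,2) by (simp add: power_divide real_sqrt_divide)
  have z: "C / b = b/a + b/a"
    using assms by (simp add: field_simps power2_eq_square)
  have p: "b^2 / (a * C) = 1/2"
    unfolding assms(3) using assms(2) by simp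
  show ?thesis
    unfolding s z p by (simp add: two_point_half_def zero_or_def)
qed

theorem proposition2:
  fixes a b c \<theta> :: real
  assumes "a > 0" "b > 0" "c > 0" "\<theta> > 0"
    and "(b^2 - a * (c - \<theta>)) / a^2 < 0"
  defines "\<zeta> \<equiv> (b^2 - a * (c - \<theta>)) / a^2"
    and "\<kappa> \<equiv> b / a"
    and "s \<equiv> sqrt (- ((b^2 - a * (c - \<theta>)) / a^2))"
    and "z \<equiv> (c - \<theta>) / b"
    and "p \<equiv> b^2 / (a * (c - \<theta>))"
  shows
    "(a \<le> 2 * b^2 / (c - \<theta>) \<longrightarrow>
        set_pmf (two_point_half (\<kappa> - s) (\<kappa> + s)) \<subseteq> {0..} \<and>
        measure_pmf.expectation (two_point_half (\<kappa> - s) (\<kappa> + s)) (\<lambda>x. x) = \<kappa> \<and>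
        measure_pmf.variance (two_point_half (\<kappa> - s) (\<kappa> + s)) (\<lambda>x. x) = - \<zeta> \<and>
        mixed_NE a b c \<theta> (pmf_borel (two_point_half (\<kappa> - s) (\<kappa> + s)))
                         (pmf_borel (two_point_half (\<kappa> - s) (\<kappa> + s))))
   \<and> (a \<ge> 2 * b^2 / (c - \<theta>) \<longrightarrow>
        0 < p \<and> p < 1 \<and>
        set_pmf (zero_or p z) \<subseteq> {0..} \<and>
        measure_pmf.expectation (zero_or p z) (\<lambda>x. x) = \<kappa> \<and>
        measure_pmf.variance (zero_or p z) (\<lambda>x. x) = - \<zeta> \<and>
        mixed_NE a b c \<theta> (pmf_borel (zero_or p z)) (pmf_borel (zero_or p z)))
   \<and> (a = 2 * b^2 / (c - \<theta>) \<longrightarrow> two_point_half (\<kappa> - s) (\<kappa> + s) = zero_or p z)"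
proof -
  have zeta_neg: "b^2 < a * (c - \<theta>)"
    using assms(1,5) by (simp add: divide_less_0_iff)
  then have "a * (c - \<theta>) > 0"
    using zero_le_power2[of b] by linarith
  then have "c - \<theta> > 0"
    using assms(1) by (simp add: zero_less_mult_iff)
  then have threshold: "a \<le> 2 * b^2 / (c - \<theta>) \<longleftrightarrow> a * (c - \<theta>) \<le> 2 * b^2"
    by (simp add: le_divide_eq)
  have s_eq: "s = sqrt ((a * (c - \<theta>) - b^2) / a^2)"
    unfolding s_def by (simp add: minus_divide_left)
  show ?thesis
  proof (intro conjI impI)
    assume "a \<le> 2 * b^2 / (c - \<theta>)"
    note moments = two_point_half_moments[OF assms(1,2) zeta_neg this[unfolded threshold],
      folded s_eq \<kappa>_def]
    show "set_pmf (two_point_half (\<kappa> - s) (\<kappa> + s)) \<subseteq> {0..}"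
      by (rule moments(1))
    show "measure_pmf.expectation (two_point_half (\<kappa> - s) (\<kappa> + s)) (\<lambda>x. x) = \<kappa>"
      "measure_pmf.variance (two_point_half (\<kappa> - s) (\<kappa> + s)) (\<lambda>x. x) = - \<zeta>"
      "mixed_NE a b c \<theta> (pmf_borel (two_point_half (\<kappa> - s) (\<kappa> + s)))
         (pmf_borel (two_point_half (\<kappa> - s) (\<kappa> + s)))"
      using moments_symmetric_mixed_NE[OF assms(1) finite_set_two_point_half moments,
          folded \<zeta>_def \<kappa>_def] by blast+
  next
    note moments = zero_or_moments[OF assms(1,2) zeta_neg, folded p_def z_def]
    show "0 < p" "p < 1" "set_pmf (zero_or p z) \<subseteq> {0..}"
      by (fact moments(1-3))+
    show "measure_pmf.expectation (zero_or p z) (\<lambda>x. x) = \<kappa>"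
      "measure_pmf.variance (zero_or p z) (\<lambda>x. x) = - \<zeta>"
      "mixed_NE a b c \<theta> (pmf_borel (zero_or p z)) (pmf_borel (zero_or p z))"
      using moments_symmetric_mixed_NE[OF assms(1) finite_set_zero_or moments(3-5),
          folded \<zeta>_def \<kappa>_def] by blast+
  next
    assume "a = 2 * b^2 / (c - \<theta>)"
    then have "a * (c - \<theta>) = 2 * b^2"
      using \<open>c - \<theta> > 0\<close> by simp
    from two_point_half_eq_zero_or[OF assms(1,2) this]
    show "two_point_half (\<kappa> - s) (\<kappa> + s) = zero_or p z"
      unfolding s_eq \<kappa>_def p_def z_def .
  qed
qed

end
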